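(* Let $\epsilon\in(0,1]$, $\delta\in(0,1)$, $0<\eta\le\frac{\epsilon}{40}$. Then the Multiplicative Weights mechanism $M^*_\eta$ is $4\eta$-approximately truthful, and for every belief matrix $P\in[0,1]^{n\times m}$ and ground truth $\vec\theta\in[0,1]^m$ with $m\ge\frac{5\ln(2n/\delta)}{\eta\epsilon}$, and every report matrix $R$ in which each $r_i$ is undominated for belief $p_i$, with probability at least $1-\delta$ over $\vec y\sim\vec\theta$ and $i\sim M^*_\eta(R,\vec y)$ the selected forecaster is $\epsilon$-optimal. In particular, with $\eta=\epsilon/40$, the event complexity satisfies $m^*(n,\epsilon,\delta)\le\frac{200\ln(2n/\delta)}{\epsilon^2}$.
   Context: Setting: $n\ge2$ forecasters, $m$ independent binary events with $\Pr[y_t=1]=\theta_t$ (written $\vec y\sim\vec\theta$); forecaster $i$ has beliefs $p_i\in[0,1]^m$ and reports $r_i\in[0,1]^m$. Quadratic score $S(q,y)=1-(y-q)^2$. Accuracy $a_i=1-\frac1m\sum_t(p_{it}-\theta_t)^2$; $i$ is $\epsilon$-optimal if $a_i\ge\max_ja_j-\epsilon$. Multiplicative Weights: $M^*_\eta(R,\vec y)_i=\exp(\eta\sum_tS(r_{it},y_t))/\sum_j\exp(\eta\sum_tS(r_{jt},y_t))$. $M(R;p_i)=\mathbb{E}_{\vec y\sim p_i}M(R,\vec y)$ with $y_t\sim\mathrm{Bernoulli}(p_{it})$ independently. For fixed $p_i$, $\hat r_i$ strictly dominates $r_i$ if $M(\hat r_i,R_{-i};p_i)_i>M(r_i,R_{-i};p_i)_i$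 for all $R_{-i}$; $r_i$ is undominated otherwise. $\gamma$-approximately truthful: for all $p_i$ an undominated report exists and all undominated $r_i$ satisfy $\|r_i-p_i\|_\infty\le\gamma$. A mechanism is $(\epsilon,\delta)$-accurate in setting $(n,m,P,\vec\theta)$ if for all $R$ consisting of undominated reports, with probability $\ge1-\delta$ over $\vec y\sim\vec\theta$ and $i\sim M(R,\vec y)$, $i$ is $\epsilon$-optimal; the event complexity $m^*(n,\epsilon,\delta)$ is the smallest $m$ such that the mechanism is $(\epsilon,\delta)$-accurate for all $(P,\vec\theta)$ with $n$ forecasters and $m$ events. *)

theory Defs
  imports Complex_Main "HOL-Library.FuncSet"
begin

text \<open>Forecasters are indexed by i < n, events by t < m.
  Belief / report matrices are functions nat \<Rightarrow> nat \<Rightarrow> real (row i, column t);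
  a realisation of the events is a function y :: nat \<Rightarrow> bool (y t = True means y_t = 1).\<close>

definition valid_vec :: "nat \<Rightarrow> (nat \<Rightarrow> real) \<Rightarrow> bool" where
  "valid_vec m v \<longleftrightarrow> (\<forall>t<m. 0 \<le> v t \<and> v t \<le> 1)"

definition outcomes :: "nat \<Rightarrow> (nat \<Rightarrow> bool) set" where
  "outcomes m = PiE {..<m} (\<lambda>_. (UNIV :: bool set))"

definition bprob :: "nat \<Rightarrow> (nat \<Rightarrow> real) \<Rightarrow> (nat \<Rightarrow> bool) \<Rightarrow> real" where
  "bprob m q y = (\<Prod>t<m. if y t then q t else 1 - q t)"

definition qscore :: "real \<Rightarrow> bool \<Rightarrow> real" where
  "qscore q b = 1 - (of_bool b - q)^2"

definition total_score :: "nat \<Rightarrow> (nat \<Rightarrow> real) \<Rightarrow> (nat \<Rightarrow> bool) \<Rightarrow> real" where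
  "total_score m r y = (\<Sum>t<m. qscore (r t) (y t))"

definition MW :: "real \<Rightarrow> nat \<Rightarrow> nat \<Rightarrow> (nat \<Rightarrow> nat \<Rightarrow> real) \<Rightarrow> (nat \<Rightarrow> bool) \<Rightarrow> nat \<Rightarrow> real" where
  "MW \<eta> n m R y i =
     exp (\<eta> * total_score m (R i) y) / (\<Sum>j<n. exp (\<eta> * total_score m (R j) y))"

definition MW_exp :: "real \<Rightarrow> nat \<Rightarrow> nat \<Rightarrow> (nat \<Rightarrow> nat \<Rightarrow> real) \<Rightarrow> (nat \<Rightarrow> real) \<Rightarrow> nat \<Rightarrow> real" where
  "MW_exp \<eta> n m R p i = (\<Sum>y\<in>outcomes m. bprob m p y * MW \<eta> n m R y i)"

definition strictly_dominates ::
  "real \<Rightarrow> nat \<Rightarrow> nat \<Rightarrow> nat \<Rightarrow> (nat \<Rightarrow> real) \<Rightarrow> (nat \<Rightarrow> real) \<Rightarrow> (nat \<Rightarrow> real) \<Rightarrow> bool" where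
  "strictly_dominates \<eta> n m i p r' r \<longleftrightarrow>
     (\<forall>R. (\<forall>j<n. j \<noteq> i \<longrightarrow> valid_vec m (R j)) \<longrightarrow>
          MW_exp \<eta> n m (R(i := r')) p i > MW_exp \<eta> n m (R(i := r)) p i)"

definition undominated ::
  "real \<Rightarrow> nat \<Rightarrow> nat \<Rightarrow> nat \<Rightarrow> (nat \<Rightarrow> real) \<Rightarrow> (nat \<Rightarrow> real) \<Rightarrow> bool" where
  "undominated \<eta> n m i p r \<longleftrightarrow>
     valid_vec m r \<and> \<not> (\<exists>r'. valid_vec m r' \<and> strictly_dominates \<eta> n m i p r' r)"

definition approx_truthful :: "real \<Rightarrow> nat \<Rightarrow> nat \<Rightarrow> real \<Rightarrow> bool" where
  "approx_truthful \<eta> n m \<gamma> \<longleftrightarrow>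
     (\<forall>i<n. \<forall>p. valid_vec m p \<longrightarrow>
        (\<exists>r. undominated \<eta> n m i p r) \<and>
        (\<forall>r. undominated \<eta> n m i p r \<longrightarrow> (\<forall>t<m. \<bar>r t - p t\<bar> \<le> \<gamma>)))"

definition accuracy :: "nat \<Rightarrow> (nat \<Rightarrow> real) \<Rightarrow> (nat \<Rightarrow> real) \<Rightarrow> real" where
  "accuracy m p \<theta> = 1 - (1 / real m) * (\<Sum>t<m. (p t - \<theta> t)^2)"

definition eps_optimal ::
  "nat \<Rightarrow> nat \<Rightarrow> (nat \<Rightarrow> nat \<Rightarrow> real) \<Rightarrow> (nat \<Rightarrow> real) \<Rightarrow> real \<Rightarrow> nat \<Rightarrow> bool" where
  "eps_optimal n m P \<theta> \<epsilon> i \<longleftrightarrow>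
     accuracy m (P i) \<theta> \<ge> (MAX j\<in>{..<n}. accuracy m (P j) \<theta>) - \<epsilon>"

definition mw_accurate ::
  "real \<Rightarrow> nat \<Rightarrow> nat \<Rightarrow> (nat \<Rightarrow> nat \<Rightarrow> real) \<Rightarrow> (nat \<Rightarrow> real) \<Rightarrow> real \<Rightarrow> real \<Rightarrow> bool" where
  "mw_accurate \<eta> n m P \<theta> \<epsilon> \<delta> \<longleftrightarrow>
     (\<forall>R. (\<forall>i<n. undominated \<eta> n m i (P i) (R i)) \<longrightarrow>
        (\<Sum>y\<in>outcomes m. bprob m \<theta> y *
            (\<Sum>i\<in>{i. i < n \<and> eps_optimal n m P \<theta> \<epsilon> i}. MW \<eta> n m R y i)) \<ge> 1 - \<delta>)"

definition event_complexity :: "real \<Rightarrow> nat \<Rightarrow> real \<Rightarrow> real \<Rightarrow> nat" where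
  "event_complexity \<eta> n \<epsilon> \<delta> =
     (LEAST m. \<forall>P \<theta>. (\<forall>i<n. valid_vec m (P i)) \<and> valid_vec m \<theta> \<longrightarrow>
                      mw_accurate \<eta> n m P \<theta> \<epsilon> \<delta>)"

end

theory Submission
  imports Defs "HOL-Analysis.Analysis"
begin

text \<open>
  Truthfulness: fix every report except coordinate t of forecaster i. The derivative of i's
  expected selection probability in r_t is a sum over pairs of outcomes differing only in y_t.
  Revealing one event moves every total score by at most 1, so the logistic slopes within a pair
  agree up to a factor e^(4 eta); hence the derivative has the sign of p_t - r_t as soon as
  |r_t - p_t| > 4 eta, and moving r_t towards p_t is a strictly dominating deviation.

  Accuracy: undominated reports are then 4 eta-close to the beliefs, so an eps-suboptimal
  forecaster j trails the best forecaster k by about eps m in expected squared error. Its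
  selection probability is at most exp (eta (S_j - S_k)), whose expectation factorises over the
  independent events and, by exp z \<le> 1 + z + z^2, is at most exp (- eta eps m / 2), which the
  bound on m makes at most delta / (2 n). A union bound over the suboptimal forecasters ends the
  proof.
\<close>

section \<open>Independent Bernoulli outcomes\<close>

lemma finite_outcomes [simp]: "finite (outcomes m)"
  unfolding outcomes_def by (intro finite_PiE) auto

lemma bprob_nonneg: "valid_vec m q \<Longrightarrow> 0 \<le> bprob m q y"
  unfolding bprob_def valid_vec_def by (intro prod_nonneg) auto

lemma sum_bprob_mult_prod:
  "(\<Sum>y\<in>outcomes m. bprob m q y * (\<Prod>t<m. g t (y t)))
     = (\<Prod>t<m. q t * g t True + (1 - q t) * g t False)"
proof -
  have "(\<Prod>t<m. q t * g t True + (1 - q t) * g t False)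
      = (\<Prod>t<m. \<Sum>b\<in>(UNIV::bool set). (if b then q t else 1 - q t) * g t b)"
    by (simp add: UNIV_bool add.commute)
  also have "\<dots> = (\<Sum>y\<in>outcomes m. \<Prod>t<m. (if y t then q t else 1 - q t) * g t (y t))"
    unfolding outcomes_def by (subst prod_sum_PiE) auto
  also have "\<dots> = (\<Sum>y\<in>outcomes m. bprob m q y * (\<Prod>t<m. g t (y t)))"
    unfolding bprob_def by (simp add: prod.distrib)
  finally show ?thesis by simp
qed

lemma sum_bprob_eq_1: "(\<Sum>y\<in>outcomes m. bprob m q y) = 1"
  using sum_bprob_mult_prod[of m q "\<lambda>_ _. 1"] by simp

lemma sum_outcomes_pair:
  assumes "t < m"
  shows "(\<Sum>y\<in>outcomes m. f y) = (\<Sum>y\<in>{y\<in>outcomes m. y t}. f y + f (y(t:=False)))"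
proof -
  let ?A = "{y\<in>outcomes m. y t}" and ?B = "{y\<in>outcomes m. \<not> y t}"
  have "(\<Sum>y\<in>outcomes m. f y) = sum f ?A + sum f ?B"
    by (subst sum.union_disjoint[symmetric]) (auto intro: sum.cong)
  moreover have "?B = (\<lambda>y. y(t:=False)) ` ?A"
  proof
    show "?B \<subseteq> (\<lambda>y. y(t:=False)) ` ?A"
    proof
      fix y assume y: "y \<in> ?B"
      then have "y(t:=True) \<in> ?A"
        using assms by (auto simp: outcomes_def PiE_iff extensional_def)
      moreover have "y = (y(t:=True))(t:=False)" using y by (auto simp: fun_eq_iff)
      ultimately show "y \<in> (\<lambda>y. y(t:=False)) ` ?A" by blast
    qed
  qed (use assms in \<open>auto simp: outcomes_def PiE_iff extensional_def\<close>)
  moreover have "inj_on (\<lambda>y. y(t:=False)) ?A"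
    by (auto simp: inj_on_def fun_eq_iff)
  ultimately show ?thesis by (simp add: sum.reindex sum.distrib)
qed

definition bprob_except :: "nat \<Rightarrow> nat \<Rightarrow> (nat \<Rightarrow> real) \<Rightarrow> (nat \<Rightarrow> bool) \<Rightarrow> real" where
  "bprob_except m t q y = (\<Prod>t'\<in>{..<m}-{t}. if y t' then q t' else 1 - q t')"

lemma bprob_remove:
  "t < m \<Longrightarrow> bprob m q y = (if y t then q t else 1 - q t) * bprob_except m t q y"
  unfolding bprob_def bprob_except_def by (subst prod.remove[of _ t]) auto

lemma bprob_except_fun_upd [simp]: "bprob_except m t q (y(t:=b)) = bprob_except m t q y"
  unfolding bprob_except_def by (intro prod.cong) auto

lemma bprob_except_nonneg: "valid_vec m q \<Longrightarrow> 0 \<le> bprob_except m t q y"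
  unfolding bprob_except_def valid_vec_def by (intro prod_nonneg) auto

lemma bprob_except_pos_witness:
  assumes "t < m" "valid_vec m q"
  shows "\<exists>y\<in>{y\<in>outcomes m. y t}. 0 < bprob_except m t q y"
proof -
  define y where "y t' = (if t' < m then t' = t \<or> 0 < q t' else undefined)" for t'
  have "y \<in> {y\<in>outcomes m. y t}"
    using assms unfolding y_def outcomes_def by (auto simp: PiE_iff extensional_def)
  moreover have "0 < bprob_except m t q y"
    unfolding bprob_except_def
    using assms(2) by (intro prod_pos) (auto simp: y_def valid_vec_def not_less)
  ultimately show ?thesis by blast
qed

section \<open>Scores and the Multiplicative Weights mechanism\<close>

lemma qscore_bounds: "0 \<le> q \<Longrightarrow> q \<le> 1 \<Longrightarrow> 0 \<le> qscore q b \<and> qscore q b \<le> 1"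
  unfolding qscore_def by (cases b) (auto simp: power2_eq_square mult_le_one)

lemma total_score_fun_upd:
  assumes "t < m"
  shows "total_score m (r(t:=x)) y = (\<Sum>t'\<in>{..<m}-{t}. qscore (r t') (y t')) + qscore x (y t)"
proof -
  have "total_score m (r(t:=x)) y
      = qscore x (y t) + (\<Sum>t'\<in>{..<m}-{t}. qscore ((r(t:=x)) t') (y t'))"
    unfolding total_score_def using assms by (subst sum.remove[of _ t]) auto
  also have "(\<Sum>t'\<in>{..<m}-{t}. qscore ((r(t:=x)) t') (y t'))
      = (\<Sum>t'\<in>{..<m}-{t}. qscore (r t') (y t'))"
    by (intro sum.cong) auto
  finally show ?thesis by (metis add.commute)
qed

lemma total_score_flip:
  assumes "t < m" "0 \<le> q t" "q t \<le> 1"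
  shows "\<bar>total_score m q y - total_score m q (y(t:=b))\<bar> \<le> 1"
proof -
  have split: "total_score m q y' = (\<Sum>t'\<in>{..<m}-{t}. qscore (q t') (y' t')) + qscore (q t) (y' t)"
    for y'
    using total_score_fun_upd[OF assms(1), of q "q t"] by simp
  have "(\<Sum>t'\<in>{..<m}-{t}. qscore (q t') ((y(t:=b)) t')) = (\<Sum>t'\<in>{..<m}-{t}. qscore (q t') (y t'))"
    by (intro sum.cong) auto
  then show ?thesis
    using split[of y] split[of "y(t:=b)"]
      qscore_bounds[OF assms(2,3), of "y t"] qscore_bounds[OF assms(2,3), of b]
    by (auto simp: abs_le_iff)
qed

lemma exp_scaled_diff_bounds:
  fixes \<eta> u v :: real
  assumes "0 \<le> \<eta>" "\<bar>u - v\<bar> \<le> 1"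
  shows "exp (-\<eta>) * exp (\<eta> * v) \<le> exp (\<eta> * u) \<and> exp (\<eta> * u) \<le> exp \<eta> * exp (\<eta> * v)"
proof -
  have "\<eta> * (v - u) \<le> \<eta> * 1" "\<eta> * (u - v) \<le> \<eta> * 1"
    using assms by (intro mult_left_mono; simp)+
  then show ?thesis by (simp add: mult_exp_exp algebra_simps)
qed

definition rivals_weight ::
  "real \<Rightarrow> nat \<Rightarrow> nat \<Rightarrow> (nat \<Rightarrow> nat \<Rightarrow> real) \<Rightarrow> nat \<Rightarrow> (nat \<Rightarrow> bool) \<Rightarrow> real" where
  "rivals_weight \<eta> n m R i y = (\<Sum>j\<in>{..<n}-{i}. exp (\<eta> * total_score m (R j) y))"

lemma rivals_weight_pos:
  assumes "n \<ge> 2" "i < n"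
  shows "0 < rivals_weight \<eta> n m R i y"
proof -
  have "(if i = 0 then 1 else 0) \<in> {..<n}-{i}" using assms by auto
  then show ?thesis unfolding rivals_weight_def by (intro sum_pos) auto
qed

lemma rivals_weight_flip_bounds:
  assumes "t < m" "0 \<le> \<eta>" "\<forall>j<n. j \<noteq> i \<longrightarrow> valid_vec m (R j)"
  shows "exp (-\<eta>) * rivals_weight \<eta> n m R i (y(t:=b)) \<le> rivals_weight \<eta> n m R i y
    \<and> rivals_weight \<eta> n m R i y \<le> exp \<eta> * rivals_weight \<eta> n m R i (y(t:=b))"
proof -
  have "exp (-\<eta>) * exp (\<eta> * total_score m (R j) (y(t:=b))) \<le> exp (\<eta> * total_score m (R j) y)
      \<and> exp (\<eta> * total_score m (R j) y) \<le> exp \<eta> * exp (\<eta> * total_score m (R j) (y(t:=b)))"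
    if "j \<in> {..<n}-{i}" for j
    using that assms total_score_flip[OF assms(1), of "R j" y b]
    by (intro exp_scaled_diff_bounds) (auto simp: valid_vec_def)
  then show ?thesis
    unfolding rivals_weight_def sum_distrib_left by (auto intro: sum_mono)
qed

lemma MW_fun_upd_self:
  assumes "i < n"
  shows "MW \<eta> n m (R(i:=r)) y i = exp (\<eta> * total_score m r y) /
     (exp (\<eta> * total_score m r y) + rivals_weight \<eta> n m R i y)"
proof -
  have "(\<Sum>j\<in>{..<n}-{i}. exp (\<eta> * total_score m ((R(i:=r)) j) y)) = rivals_weight \<eta> n m R i y"
    unfolding rivals_weight_def by (intro sum.cong) auto
  then show ?thesis
    unfolding MW_def using assms by (subst sum.remove[of _ i]) auto
qed

lemma sum_exp_total_score_pos: "0 < (n::nat) \<Longrightarrow> 0 < (\<Sum>j<n. exp (\<eta> * total_score m (R j) y))"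
  by (rule sum_pos) auto

lemma MW_sum_eq_1: "0 < n \<Longrightarrow> (\<Sum>j<n. MW \<eta> n m R y j) = 1"
  unfolding MW_def
  using sum_exp_total_score_pos[of n \<eta> m R y] by (simp add: sum_divide_distrib[symmetric])

lemma MW_le_exp_score_diff:
  assumes "k < n"
  shows "MW \<eta> n m R y j \<le> exp (\<eta> * (total_score m (R j) y - total_score m (R k) y))"
proof -
  have "exp (\<eta> * total_score m (R k) y) \<le> (\<Sum>j<n. exp (\<eta> * total_score m (R j) y))"
    using assms by (intro member_le_sum) auto
  then have "MW \<eta> n m R y j \<le> exp (\<eta> * total_score m (R j) y) / exp (\<eta> * total_score m (R k) y)"
    unfolding MW_def using sum_exp_total_score_pos[of n \<eta> m R y] assms
    by (intro divide_left_mono) auto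
  then show ?thesis by (simp add: exp_diff[symmetric] algebra_simps)
qed

section \<open>Approximate truthfulness\<close>

text \<open>d/ds (e^s / (e^s + Z)) = logistic_slope (e^s) Z.\<close>
definition logistic_slope :: "real \<Rightarrow> real \<Rightarrow> real" where
  "logistic_slope E Z = E * Z / (E + Z)^2"

lemma logistic_slope_pos: "0 < E \<Longrightarrow> 0 < Z \<Longrightarrow> 0 < logistic_slope E Z"
  unfolding logistic_slope_def by simp

lemma has_real_derivative_logistic:
  assumes g: "(g has_real_derivative g') (at x)" and "0 < Z"
  shows "((\<lambda>x. exp (g x) / (exp (g x) + Z)) has_real_derivative
     g' * logistic_slope (exp (g x)) Z) (at x)"
proof -
  have nz: "exp (g x) + Z \<noteq> 0" using assms by (metis add_pos_pos exp_gt_zero less_irrefl)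
  have e: "((\<lambda>x. exp (g x)) has_real_derivative exp (g x) * g') (at x)"
    by (rule DERIV_chain2[OF DERIV_exp g])
  have "((\<lambda>x. exp (g x) + Z) has_real_derivative exp (g x) * g') (at x)"
    using e by (rule derivative_eq_intros) auto
  from DERIV_divide[OF e this nz] show ?thesis
    unfolding logistic_slope_def by (simp add: power2_eq_square field_simps)
qed

lemma logistic_slope_perturb:
  fixes E0 E1 Z0 Z1 a :: real
  assumes "0 < E0" "0 < Z0" "0 \<le> a"
    and "exp (-a) * E0 \<le> E1" "E1 \<le> exp a * E0" "exp (-a) * Z0 \<le> Z1" "Z1 \<le> exp a * Z0"
  shows "exp (-4*a) * logistic_slope E0 Z0 \<le> logistic_slope E1 Z1"
proof -
  have "0 < exp (-a) * E0" "0 < exp (-a) * Z0" using assms by simp_all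
  then have pos: "0 < E1" "0 < Z1" using assms by linarith+
  have "exp (-2*a) = exp (-a) * exp (-a)" by (simp add: mult_exp_exp)
  then have "exp (-2*a) * (E0 * Z0) = (exp (-a) * E0) * (exp (-a) * Z0)"
    by (simp add: algebra_simps)
  also have "\<dots> \<le> E1 * Z1"
    using assms pos by (intro mult_mono) auto
  finally have num: "exp (-2*a) * (E0 * Z0) \<le> E1 * Z1" .
  have "(E1 + Z1)^2 \<le> (exp a * (E0 + Z0))^2"
    using assms pos by (intro power_mono) (auto simp: algebra_simps)
  also have "\<dots> = exp (2*a) * (E0 + Z0)^2"
    by (simp add: power_mult_distrib exp_double[symmetric])
  finally have den: "(E1 + Z1)^2 \<le> exp (2*a) * (E0 + Z0)^2" .
  have e4: "exp (-4*a) = exp (-2*a) / exp (2*a)" by (simp add: exp_diff[symmetric])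
  have "exp (-4*a) * logistic_slope E0 Z0 = exp (-2*a) * (E0 * Z0) / (exp (2*a) * (E0 + Z0)^2)"
    unfolding logistic_slope_def e4 by (simp add: field_simps)
  also have "\<dots> \<le> logistic_slope E1 Z1"
    unfolding logistic_slope_def using num den assms pos by (intro frac_le) auto
  finally show ?thesis .
qed

definition MW_slope ::
  "real \<Rightarrow> nat \<Rightarrow> nat \<Rightarrow> (nat \<Rightarrow> nat \<Rightarrow> real) \<Rightarrow> nat \<Rightarrow> (nat \<Rightarrow> real) \<Rightarrow> (nat \<Rightarrow> bool) \<Rightarrow> real"
where
  "MW_slope \<eta> n m R i r y =
     logistic_slope (exp (\<eta> * total_score m r y)) (rivals_weight \<eta> n m R i y)"

lemma MW_slope_pos: "2 \<le> n \<Longrightarrow> i < n \<Longrightarrow> 0 < MW_slope \<eta> n m R i r y"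
  unfolding MW_slope_def by (intro logistic_slope_pos rivals_weight_pos) auto

lemma MW_slope_flip:
  assumes "2 \<le> n" "i < n" "t < m" "0 \<le> \<eta>" "0 \<le> r t" "r t \<le> 1"
    and "\<forall>j<n. j \<noteq> i \<longrightarrow> valid_vec m (R j)"
  shows "exp (-4*\<eta>) * MW_slope \<eta> n m R i r (y(t:=b)) \<le> MW_slope \<eta> n m R i r y"
  unfolding MW_slope_def
proof (rule logistic_slope_perturb)
  show "exp (-\<eta>) * exp (\<eta> * total_score m r (y(t:=b))) \<le> exp (\<eta> * total_score m r y)"
    and "exp (\<eta> * total_score m r y) \<le> exp \<eta> * exp (\<eta> * total_score m r (y(t:=b)))"
    using exp_scaled_diff_bounds[OF assms(4) total_score_flip[of t m r, OF assms(3,5,6)]] by auto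
  show "exp (-\<eta>) * rivals_weight \<eta> n m R i (y(t:=b)) \<le> rivals_weight \<eta> n m R i y"
    and "rivals_weight \<eta> n m R i y \<le> exp \<eta> * rivals_weight \<eta> n m R i (y(t:=b))"
    using rivals_weight_flip_bounds[OF assms(3,4,7)] by auto
qed (use assms rivals_weight_pos in auto)

definition sel_prob_deriv ::
  "real \<Rightarrow> nat \<Rightarrow> nat \<Rightarrow> (nat \<Rightarrow> nat \<Rightarrow> real) \<Rightarrow> nat \<Rightarrow> (nat \<Rightarrow> real) \<Rightarrow> nat \<Rightarrow>
     (nat \<Rightarrow> real) \<Rightarrow> real \<Rightarrow> real"
where
  "sel_prob_deriv \<eta> n m R i r t p x =
     (\<Sum>y\<in>outcomes m. bprob m p y * (2 * \<eta> * (of_bool (y t) - x) * MW_slope \<eta> n m R i (r(t:=x)) y))"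

lemma has_real_derivative_MW_exp_coordinate:
  assumes "2 \<le> n" "i < n" "t < m"
  shows "((\<lambda>x. MW_exp \<eta> n m (R(i := r(t:=x))) p i) has_real_derivative
     sel_prob_deriv \<eta> n m R i r t p x) (at x)"
proof -
  have score: "((\<lambda>x. \<eta> * total_score m (r(t:=x)) y) has_real_derivative
      2 * \<eta> * (of_bool (y t) - x)) (at x)" for y
    unfolding total_score_fun_upd[OF assms(3)] qscore_def
    by (auto intro!: derivative_eq_intros simp: algebra_simps)
  show ?thesis
    unfolding MW_exp_def MW_fun_upd_self[OF assms(2)] sel_prob_deriv_def MW_slope_def
    by (intro DERIV_sum DERIV_cmult has_real_derivative_logistic score rivals_weight_pos assms)
qed

lemma sel_prob_deriv_paired:
  assumes "t < m"
  shows "sel_prob_deriv \<eta> n m R i r t p x = (\<Sum>y\<in>{y\<in>outcomes m. y t}.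
     2 * \<eta> * bprob_except m t p y *
     (p t * (1 - x) * MW_slope \<eta> n m R i (r(t:=x)) y
       - (1 - p t) * x * MW_slope \<eta> n m R i (r(t:=x)) (y(t:=False))))"
  unfolding sel_prob_deriv_def sum_outcomes_pair[OF assms]
  by (intro sum.cong refl) (simp add: bprob_remove[OF assms] algebra_simps)

lemma paired_term_pos:
  fixes p x K0 K1 \<eta> :: real
  assumes "0 \<le> p" "p \<le> 1" "0 \<le> x" "x \<le> 1" "0 < K0" "exp (-4*\<eta>) * K0 \<le> K1"
    and "x < p - 4*\<eta>" "0 < \<eta>"
  shows "0 < p * (1 - x) * K1 - (1 - p) * x * K0"
proof -
  have a: "0 \<le> p * (1 - x)" "p * (1 - x) \<le> 1" using assms by (auto simp: mult_le_one)
  have "p * (1 - x) * ((1 - 4*\<eta>) * K0) \<le> p * (1 - x) * (exp (-4*\<eta>) * K0)"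
    using a assms exp_ge_add_one_self[of "-4*\<eta>"] by (intro mult_left_mono mult_right_mono) auto
  also have "\<dots> \<le> p * (1 - x) * K1"
    using a assms by (intro mult_left_mono) auto
  finally have "K0 * (p * (1 - x) - 4*\<eta> * (p * (1 - x))) \<le> p * (1 - x) * K1"
    by (simp add: algebra_simps)
  moreover have "4*\<eta> * (p * (1 - x)) \<le> 4*\<eta>" using a assms by simp
  then have "0 < K0 * (p * (1 - x) - 4*\<eta> * (p * (1 - x)) - (1 - p) * x)"
    using assms by (intro mult_pos_pos) (auto simp: algebra_simps)
  ultimately show ?thesis by (simp add: algebra_simps)
qed

lemma paired_term_neg:
  fixes p x K0 K1 \<eta> :: real
  assumes "0 \<le> p" "p \<le> 1" "0 \<le> x" "x \<le> 1" "0 < K1" "exp (-4*\<eta>) * K1 \<le> K0"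
    and "p + 4*\<eta> < x" "0 < \<eta>"
  shows "p * (1 - x) * K1 - (1 - p) * x * K0 < 0"
  using paired_term_pos[of "1 - p" "1 - x" K1 \<eta> K0] assms by (simp add: algebra_simps)

lemma sum_weighted_pos:
  fixes w f :: "'a \<Rightarrow> real"
  assumes "finite A" "a \<in> A" "0 < w a" "\<And>y. y \<in> A \<Longrightarrow> 0 \<le> w y" "\<And>y. y \<in> A \<Longrightarrow> 0 < f y"
  shows "0 < (\<Sum>y\<in>A. w y * f y)"
  using assms by (intro sum_pos2[of A a]) (auto intro: mult_nonneg_nonneg less_imp_le)

lemma sel_prob_deriv_sign:
  assumes "2 \<le> n" "i < n" "t < m" "0 < \<eta>" "valid_vec m p" "0 \<le> x" "x \<le> 1"
    and "\<forall>j<n. j \<noteq> i \<longrightarrow> valid_vec m (R j)"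
  shows "x < p t - 4*\<eta> \<Longrightarrow> 0 < sel_prob_deriv \<eta> n m R i r t p x"
    and "p t + 4*\<eta> < x \<Longrightarrow> sel_prob_deriv \<eta> n m R i r t p x < 0"
proof -
  let ?A = "{y\<in>outcomes m. y t}"
  let ?K = "MW_slope \<eta> n m R i (r(t:=x))"
  let ?w = "\<lambda>y. 2 * \<eta> * bprob_except m t p y"
  let ?f = "\<lambda>y. p t * (1 - x) * ?K y - (1 - p t) * x * ?K (y(t:=False))"
  have pt: "0 \<le> p t" "p t \<le> 1" using assms(3,5) by (auto simp: valid_vec_def)
  have slope: "exp (-4*\<eta>) * ?K (y(t:=False)) \<le> ?K y" "exp (-4*\<eta>) * ?K y \<le> ?K (y(t:=False))"
    if "y \<in> ?A" for y
  proof -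
    have "(y(t:=False))(t:=True) = y" using that by (auto simp: fun_eq_iff)
    then show "exp (-4*\<eta>) * ?K (y(t:=False)) \<le> ?K y" "exp (-4*\<eta>) * ?K y \<le> ?K (y(t:=False))"
      using assms MW_slope_flip[OF assms(1-3) _ _ _ assms(8), of \<eta> "r(t:=x)"]
      by (metis fun_upd_same less_imp_le)+
  qed
  have K_pos: "0 < ?K y" for y by (rule MW_slope_pos[OF assms(1,2)])
  obtain a where a: "a \<in> ?A" "0 < bprob_except m t p a"
    using bprob_except_pos_witness[OF assms(3,5)] by blast
  have w: "0 < ?w a" "\<And>y. 0 \<le> ?w y" using a assms(4) bprob_except_nonneg[OF assms(5)] by auto
  show "0 < sel_prob_deriv \<eta> n m R i r t p x" if hx: "x < p t - 4*\<eta>"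
  proof -
    have "0 < ?f y" if "y \<in> ?A" for y
      using paired_term_pos[OF pt assms(6,7) K_pos slope(1)[OF that] hx assms(4)] .
    then have "0 < (\<Sum>y\<in>?A. ?w y * ?f y)"
      by (intro sum_weighted_pos[of ?A a]) (use a w in auto)
    then show ?thesis
      unfolding sel_prob_deriv_paired[OF assms(3)] .
  qed
  show "sel_prob_deriv \<eta> n m R i r t p x < 0" if hx: "p t + 4*\<eta> < x"
  proof -
    have "0 < - ?f y" if "y \<in> ?A" for y
      using paired_term_neg[OF pt assms(6,7) K_pos slope(2)[OF that] hx assms(4)] by simp
    then have "0 < (\<Sum>y\<in>?A. ?w y * - ?f y)"
      by (intro sum_weighted_pos[of ?A a]) (use a w in auto)
    then show ?thesis
      unfolding sel_prob_deriv_paired[OF assms(3)] mult_minus_right sum_negf by linarith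
  qed
qed

lemma MW_exp_coordinate_improves:
  assumes "2 \<le> n" "i < n" "t < m" "0 < \<eta>" "valid_vec m p" "valid_vec m r"
    and "\<forall>j<n. j \<noteq> i \<longrightarrow> valid_vec m (R j)"
    and x0: "r t < x0 \<and> x0 < p t - 4*\<eta> \<or> p t + 4*\<eta> < x0 \<and> x0 < r t"
  shows "MW_exp \<eta> n m (R(i := r)) p i < MW_exp \<eta> n m (R(i := r(t:=x0))) p i"
proof -
  let ?G = "\<lambda>x. MW_exp \<eta> n m (R(i := r(t:=x))) p i"
  have rt: "0 \<le> r t" "r t \<le> 1" "0 \<le> p t" "p t \<le> 1"
    using assms(3,5,6) by (auto simp: valid_vec_def)
  note deriv = has_real_derivative_MW_exp_coordinate[OF assms(1-3)]
  note sign = sel_prob_deriv_sign[OF assms(1-5) _ _ assms(7)]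
  from x0 have "?G (r t) < ?G x0"
  proof
    assume h: "r t < x0 \<and> x0 < p t - 4*\<eta>"
    show ?thesis
    proof (rule DERIV_pos_imp_increasing[of "r t" x0 ?G])
      fix x assume "r t \<le> x" "x \<le> x0"
      then have "0 < sel_prob_deriv \<eta> n m R i r t p x"
        using h rt assms(4) by (intro sign(1)) linarith+
      then show "\<exists>y. (?G has_real_derivative y) (at x) \<and> 0 < y" using deriv by blast
    qed (use h in simp)
  next
    assume h: "p t + 4*\<eta> < x0 \<and> x0 < r t"
    show ?thesis
    proof (rule DERIV_neg_imp_decreasing[of x0 "r t" ?G])
      fix x assume "x0 \<le> x" "x \<le> r t"
      then have "sel_prob_deriv \<eta> n m R i r t p x < 0"
        using h rt assms(4) by (intro sign(2)) linarith+
      then show "\<exists>y. (?G has_real_derivative y) (at x) \<and> y < 0" using deriv by blast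
    qed (use h in simp)
  qed
  then show ?thesis by simp
qed

lemma undominated_close:
  assumes "2 \<le> n" "i < n" "t < m" "0 < \<eta>" "valid_vec m p" "undominated \<eta> n m i p r"
  shows "\<bar>r t - p t\<bar> \<le> 4*\<eta>"
proof (rule ccontr)
  assume far: "\<not> ?thesis"
  have vr: "valid_vec m r" using assms(6) by (simp add: undominated_def)
  have bounds: "0 \<le> r t" "r t \<le> 1" "0 \<le> p t" "p t \<le> 1"
    using assms(3,5) vr by (auto simp: valid_vec_def)
  define x0 where "x0 = (if r t < p t then (r t + p t - 4*\<eta>) / 2 else (r t + p t + 4*\<eta>) / 2)"
  have x0: "r t < x0 \<and> x0 < p t - 4*\<eta> \<or> p t + 4*\<eta> < x0 \<and> x0 < r t"
    using far unfolding x0_def by (auto split: if_splits)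
  have "valid_vec m (r(t:=x0))"
    using vr x0 bounds assms(4) by (auto simp: valid_vec_def)
  moreover have "strictly_dominates \<eta> n m i p (r(t:=x0)) r"
    unfolding strictly_dominates_def
    using MW_exp_coordinate_improves[OF assms(1-5) vr _ x0] by blast
  ultimately show False using assms(6) by (auto simp: undominated_def)
qed

lemma continuous_on_total_score: "continuous_on UNIV (\<lambda>r::nat \<Rightarrow> real. total_score m r y)"
  unfolding total_score_def qscore_def
  by (intro continuous_intros continuous_on_product_coordinates)

text \<open>A maximiser of the selection probability against fixed rivals is undominated. Reports only
  matter on their first m coordinates, so it suffices to maximise over the compact cube of
  reports vanishing beyond m.\<close>
lemma undominated_exists:
  assumes "2 \<le> n" "i < n"
  shows "\<exists>r. undominated \<eta> n m i p r"
proof -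
  define R0 :: "nat \<Rightarrow> nat \<Rightarrow> real" where "R0 = (\<lambda>j t. 0)"
  define f where "f r = MW_exp \<eta> n m (R0(i:=r)) p i" for r
  have f: "f = (\<lambda>r. \<Sum>y\<in>outcomes m. bprob m p y * (exp (\<eta> * total_score m r y) /
        (exp (\<eta> * total_score m r y) + rivals_weight \<eta> n m R0 i y)))"
    unfolding f_def MW_exp_def MW_fun_upd_self[OF assms(2)] by simp
  define S :: "(nat \<Rightarrow> real) set" where "S = PiE UNIV (\<lambda>t. if t < m then {0..1} else {0})"
  have "compactin (product_topology (\<lambda>_. euclidean) UNIV) S"
    unfolding S_def compactin_PiE by auto
  then have "compact S" by (simp add: euclidean_product_topology)
  moreover have "continuous_on UNIV f"
    unfolding f using rivals_weight_pos[OF assms]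
    by (intro continuous_intros continuous_on_total_score)
       (auto simp: add_pos_pos less_imp_neq[symmetric])
  then have "continuous_on S f" by (rule continuous_on_subset) simp
  moreover have "(\<lambda>_. 0) \<in> S" unfolding S_def by auto
  ultimately obtain rs where rs: "rs \<in> S" "\<And>r. r \<in> S \<Longrightarrow> f r \<le> f rs"
    using continuous_attains_sup[of S f] by blast
  have vrs: "valid_vec m rs"
    using rs(1) unfolding S_def valid_vec_def by (auto simp: PiE_iff) (metis atLeastAtMost_iff)+
  have "\<not> strictly_dominates \<eta> n m i p r' rs" if r': "valid_vec m r'" for r'
  proof
    assume "strictly_dominates \<eta> n m i p r' rs"
    moreover have "\<forall>j<n. j \<noteq> i \<longrightarrow> valid_vec m (R0 j)" unfolding R0_def valid_vec_def by auto
    ultimately have "f rs < f r'" unfolding strictly_dominates_def f_def by blast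
    define r'' where "r'' t = (if t < m then r' t else 0)" for t
    have "r'' \<in> S" using r' unfolding r''_def S_def valid_vec_def by auto
    moreover have "total_score m r'' y = total_score m r' y" for y
      unfolding total_score_def r''_def by (intro sum.cong) auto
    then have "f r'' = f r'" unfolding f by simp
    ultimately show False using rs(2) \<open>f rs < f r'\<close> by fastforce
  qed
  then show ?thesis using vrs unfolding undominated_def by blast
qed

lemma approx_truthful_MW:
  assumes "2 \<le> n" "0 < \<eta>"
  shows "approx_truthful \<eta> n m (4 * \<eta>)"
  unfolding approx_truthful_def
  using undominated_exists[OF assms(1)] undominated_close[OF assms(1) _ _ assms(2)] by blast

section \<open>Accuracy\<close>

lemma exp_le_quadratic:
  fixes z :: real
  assumes "\<bar>z\<bar> \<le> 1"
  shows "exp z \<le> 1 + z + z^2"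
proof (cases "0 \<le> z")
  case True
  then show ?thesis using exp_bound[of z] assms by simp
next
  case False
  have "exp z * (1 - z) \<le> exp z * exp (-z)"
    using exp_ge_add_one_self[of "-z"] by (intro mult_left_mono) auto
  also have "\<dots> = 1" by (simp add: exp_minus_inverse)
  also have "1 \<le> (1 + z + z^2) * (1 - z)"
    using False mult_nonpos_nonneg[of z "z * z"]
    by (simp add: algebra_simps power2_eq_square)
  finally show ?thesis using False by (simp add: mult_le_cancel_right)
qed

lemma bernoulli_exp_score_diff_le:
  fixes a c \<theta> \<eta> :: real
  assumes "0 \<le> a" "a \<le> 1" "0 \<le> c" "c \<le> 1" "0 \<le> \<theta>" "\<theta> \<le> 1" "0 \<le> \<eta>" "\<eta> \<le> 1"
  shows "\<theta> * exp (\<eta> * (qscore a True - qscore c True))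
       + (1 - \<theta>) * exp (\<eta> * (qscore a False - qscore c False))
     \<le> exp (\<eta> * ((c - \<theta>)^2 - (a - \<theta>)^2) + \<eta>^2)"
proof -
  have bound: "exp (\<eta> * (qscore a b - qscore c b)) \<le> 1 + \<eta> * (qscore a b - qscore c b) + \<eta>^2"
    for b
  proof -
    have d: "\<bar>qscore a b - qscore c b\<bar> \<le> 1"
      using qscore_bounds[of a b] qscore_bounds[of c b] assms by (auto simp: abs_le_iff)
    then have "\<bar>\<eta> * (qscore a b - qscore c b)\<bar> \<le> 1"
      using assms by (simp add: abs_mult mult_le_one)
    moreover have "(qscore a b - qscore c b)^2 \<le> 1"
      using d by (metis abs_le_square_iff abs_one one_power2)
    then have "(\<eta> * (qscore a b - qscore c b))^2 \<le> \<eta>^2"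
      by (simp add: power_mult_distrib mult_left_le)
    ultimately show ?thesis using exp_le_quadratic by fastforce
  qed
  have "\<theta> * exp (\<eta> * (qscore a True - qscore c True))
       + (1 - \<theta>) * exp (\<eta> * (qscore a False - qscore c False))
     \<le> \<theta> * (1 + \<eta> * (qscore a True - qscore c True) + \<eta>^2)
       + (1 - \<theta>) * (1 + \<eta> * (qscore a False - qscore c False) + \<eta>^2)"
    using assms bound by (intro add_mono mult_left_mono) auto
  also have "\<dots> = 1 + (\<eta> * ((c - \<theta>)^2 - (a - \<theta>)^2) + \<eta>^2)"
    unfolding qscore_def by (simp add: algebra_simps power2_eq_square)
  also have "\<dots> \<le> exp (\<eta> * ((c - \<theta>)^2 - (a - \<theta>)^2) + \<eta>^2)"
    by (rule exp_ge_add_one_self)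
  finally show ?thesis .
qed

lemma expected_exp_score_diff_le:
  assumes "valid_vec m a" "valid_vec m c" "valid_vec m \<theta>" "0 \<le> \<eta>" "\<eta> \<le> 1"
  shows "(\<Sum>y\<in>outcomes m. bprob m \<theta> y * exp (\<eta> * (total_score m a y - total_score m c y)))
    \<le> exp (\<eta> * ((\<Sum>t<m. (c t - \<theta> t)^2) - (\<Sum>t<m. (a t - \<theta> t)^2)) + real m * \<eta>^2)"
proof -
  define g where "g t b = exp (\<eta> * (qscore (a t) b - qscore (c t) b))" for t b
  have "exp (\<eta> * (total_score m a y - total_score m c y)) = (\<Prod>t<m. g t (y t))" for y
    unfolding g_def total_score_def
    by (simp add: exp_sum[symmetric] sum_subtractf[symmetric] sum_distrib_left)
  then have "(\<Sum>y\<in>outcomes m. bprob m \<theta> y * exp (\<eta> * (total_score m a y - total_score m c y)))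
      = (\<Prod>t<m. \<theta> t * g t True + (1 - \<theta> t) * g t False)"
    by (simp add: sum_bprob_mult_prod)
  also have "\<dots> \<le> (\<Prod>t<m. exp (\<eta> * ((c t - \<theta> t)^2 - (a t - \<theta> t)^2) + \<eta>^2))"
    using assms bernoulli_exp_score_diff_le[of "a t" "c t" "\<theta> t" \<eta> for t]
    unfolding g_def valid_vec_def by (intro prod_mono) (auto intro: add_nonneg_nonneg)
  also have "\<dots> = exp (\<eta> * ((\<Sum>t<m. (c t - \<theta> t)^2) - (\<Sum>t<m. (a t - \<theta> t)^2)) + real m * \<eta>^2)"
    by (simp add: exp_sum[symmetric] sum.distrib sum_subtractf sum_distrib_left right_diff_distrib)
  finally show ?thesis .
qed

lemma expected_MW_le:
  assumes "k < n" "valid_vec m (R j)" "valid_vec m (R k)" "valid_vec m \<theta>" "0 \<le> \<eta>" "\<eta> \<le> 1"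
  shows "(\<Sum>y\<in>outcomes m. bprob m \<theta> y * MW \<eta> n m R y j)
    \<le> exp (\<eta> * ((\<Sum>t<m. (R k t - \<theta> t)^2) - (\<Sum>t<m. (R j t - \<theta> t)^2)) + real m * \<eta>^2)"
proof -
  have "(\<Sum>y\<in>outcomes m. bprob m \<theta> y * MW \<eta> n m R y j)
      \<le> (\<Sum>y\<in>outcomes m. bprob m \<theta> y * exp (\<eta> * (total_score m (R j) y - total_score m (R k) y)))"
    using bprob_nonneg[OF assms(4)] MW_le_exp_score_diff[OF assms(1)]
    by (intro sum_mono mult_left_mono) auto
  also have "\<dots> \<le> exp (\<eta> * ((\<Sum>t<m. (R k t - \<theta> t)^2) - (\<Sum>t<m. (R j t - \<theta> t)^2)) + real m * \<eta>^2)"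
    by (rule expected_exp_score_diff_le[OF assms(2-6)])
  finally show ?thesis .
qed

lemma sq_dist_diff_le:
  fixes r p \<theta> :: real
  assumes "0 \<le> r" "r \<le> 1" "0 \<le> p" "p \<le> 1" "0 \<le> \<theta>" "\<theta> \<le> 1"
  shows "\<bar>(r - \<theta>)^2 - (p - \<theta>)^2\<bar> \<le> 2 * \<bar>r - p\<bar>"
proof -
  have "\<bar>(r - \<theta>)^2 - (p - \<theta>)^2\<bar> = \<bar>r - p\<bar> * \<bar>r + p - 2*\<theta>\<bar>"
    by (simp add: abs_mult[symmetric] algebra_simps power2_eq_square)
  also have "\<dots> \<le> \<bar>r - p\<bar> * 2"
    using assms by (intro mult_left_mono) auto
  finally show ?thesis by simp
qed

lemma sum_sq_dist_diff_le:
  assumes "valid_vec m r" "valid_vec m p" "valid_vec m \<theta>" "\<forall>t<m. \<bar>r t - p t\<bar> \<le> \<gamma>"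
  shows "\<bar>(\<Sum>t<m. (r t - \<theta> t)^2) - (\<Sum>t<m. (p t - \<theta> t)^2)\<bar> \<le> real m * (2 * \<gamma>)"
proof -
  have "\<bar>(\<Sum>t<m. (r t - \<theta> t)^2) - (\<Sum>t<m. (p t - \<theta> t)^2)\<bar>
      \<le> (\<Sum>t<m. \<bar>(r t - \<theta> t)^2 - (p t - \<theta> t)^2\<bar>)"
    unfolding sum_subtractf[symmetric] by (rule sum_abs)
  also have "\<dots> \<le> (\<Sum>t<m. 2 * \<gamma>)"
    using assms sq_dist_diff_le[of "r t" "p t" "\<theta> t" for t] unfolding valid_vec_def
    by (intro sum_mono) (smt (verit) lessThan_iff)
  finally show ?thesis by simp
qed

lemma expected_MW_suboptimal_le:
  assumes "j < n" "k < n" "0 < m" "0 < \<epsilon>" "\<epsilon> \<le> 1" "0 < \<eta>" "\<eta> \<le> \<epsilon> / 40"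
    and "accuracy m (P j) \<theta> < accuracy m (P k) \<theta> - \<epsilon>"
    and "\<forall>i<n. valid_vec m (P i)" "\<forall>i<n. valid_vec m (R i)" "valid_vec m \<theta>"
    and "\<forall>i<n. \<forall>t<m. \<bar>R i t - P i t\<bar> \<le> 4*\<eta>"
  shows "(\<Sum>y\<in>outcomes m. bprob m \<theta> y * MW \<eta> n m R y j) \<le> exp (- (\<eta> * \<epsilon> * real m) / 2)"
proof -
  define err where "err q = (\<Sum>t<m. (q t - \<theta> t)^2)" for q
  have "err (P k) / real m + \<epsilon> < err (P j) / real m"
    using assms(8) unfolding accuracy_def err_def by simp
  then have "(err (P k) / real m + \<epsilon>) * real m < (err (P j) / real m) * real m"
    using assms(3) by (intro mult_strict_right_mono) auto
  then have "err (P k) + \<epsilon> * real m < err (P j)"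
    using assms(3) by (simp add: algebra_simps)
  moreover have err_close: "\<bar>err (R i) - err (P i)\<bar> \<le> 8 * \<eta> * real m" if "i < n" for i
    using sum_sq_dist_diff_le[of m "R i" "P i" \<theta> "4*\<eta>"] assms(9-12) that
    unfolding err_def by (simp add: algebra_simps)
  ultimately have gap: "err (R k) - err (R j) \<le> 16 * \<eta> * real m - \<epsilon> * real m"
    using err_close[OF assms(1)] err_close[OF assms(2)] unfolding abs_le_iff by linarith
  have "\<eta> * (err (R k) - err (R j)) \<le> \<eta> * (16 * \<eta> * real m - \<epsilon> * real m)"
    using gap assms(6) by (intro mult_left_mono) auto
  moreover have "\<eta> * (17 * \<eta>) * real m \<le> \<eta> * (\<epsilon> / 2) * real m"
    using assms(6,7) by (intro mult_right_mono mult_left_mono) auto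
  ultimately have "\<eta> * (err (R k) - err (R j)) + real m * \<eta>^2 \<le> - (\<eta> * \<epsilon> * real m) / 2"
    by (simp add: algebra_simps power2_eq_square)
  moreover have "(\<Sum>y\<in>outcomes m. bprob m \<theta> y * MW \<eta> n m R y j)
      \<le> exp (\<eta> * (err (R k) - err (R j)) + real m * \<eta>^2)"
    unfolding err_def using assms(1,2,4-7,10,11) by (intro expected_MW_le) auto
  ultimately show ?thesis by (meson exp_le_cancel_iff order.trans)
qed

lemma expected_MW_sum_eq:
  assumes "0 < n" "A \<subseteq> {..<n}"
  shows "(\<Sum>y\<in>outcomes m. bprob m \<theta> y * (\<Sum>i\<in>A. MW \<eta> n m R y i))
    = 1 - (\<Sum>j\<in>{..<n}-A. \<Sum>y\<in>outcomes m. bprob m \<theta> y * MW \<eta> n m R y j)"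
proof -
  have "(\<Sum>i\<in>A. MW \<eta> n m R y i) = 1 - (\<Sum>j\<in>{..<n}-A. MW \<eta> n m R y j)" for y
    using MW_sum_eq_1[OF assms(1), of \<eta> m R y] sum.subset_diff[OF assms(2), of "MW \<eta> n m R y"]
    by simp
  then show ?thesis
    by (simp add: right_diff_distrib sum_subtractf sum_distrib_left sum_bprob_eq_1 sum.swap[of _ "{..<n}-A"])
qed

lemma mw_accurate_MW:
  assumes "2 \<le> n" "0 < \<epsilon>" "\<epsilon> \<le> 1" "0 < \<delta>" "\<delta> < 1" "0 < \<eta>" "\<eta> \<le> \<epsilon> / 40"
    and m: "5 * ln (2 * real n / \<delta>) / (\<eta> * \<epsilon>) \<le> real m"
    and P: "\<forall>i<n. valid_vec m (P i)" and \<theta>: "valid_vec m \<theta>"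
  shows "mw_accurate \<eta> n m P \<theta> \<epsilon> \<delta>"
  unfolding mw_accurate_def
proof (intro allI impI)
  fix R assume und: "\<forall>i<n. undominated \<eta> n m i (P i) (R i)"
  define L where "L = ln (2 * real n / \<delta>)"
  have "1 < 2 * real n / \<delta>" using assms(1,4,5) by (simp add: field_simps)
  then have L: "0 < L" unfolding L_def by simp
  have "5 * L \<le> \<eta> * \<epsilon> * real m"
    using m assms(2,6) unfolding L_def by (simp add: pos_divide_le_eq mult.commute)
  then have mL: "L \<le> \<eta> * \<epsilon> * real m / 2" and "0 < m"
    using L assms(2,6) by (auto intro!: Nat.gr0I)
  have R: "\<forall>i<n. valid_vec m (R i)" using und by (simp add: undominated_def)
  have close: "\<forall>i<n. \<forall>t<m. \<bar>R i t - P i t\<bar> \<le> 4*\<eta>"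
    using undominated_close[OF assms(1) _ _ assms(6)] P und by blast
  let ?acc = "\<lambda>j. accuracy m (P j) \<theta>"
  have "(MAX j\<in>{..<n}. ?acc j) \<in> ?acc ` {..<n}"
    using assms(1) by (intro Max_in) (auto simp: lessThan_empty_iff)
  then obtain k where k: "k < n" "?acc k = (MAX j\<in>{..<n}. ?acc j)" by auto
  define Opt where "Opt = {i. i < n \<and> eps_optimal n m P \<theta> \<epsilon> i}"
  have bad: "(\<Sum>y\<in>outcomes m. bprob m \<theta> y * MW \<eta> n m R y j) \<le> \<delta> / (2 * real n)"
    if "j \<in> {..<n} - Opt" for j
  proof -
    have "?acc j < ?acc k - \<epsilon>" using that k unfolding Opt_def eps_optimal_def by auto
    then have "(\<Sum>y\<in>outcomes m. bprob m \<theta> y * MW \<eta> n m R y j) \<le> exp (- (\<eta> * \<epsilon> * real m) / 2)"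
      using that k \<open>0 < m\<close> assms(2,3,6,7) P R \<theta> close
      by (intro expected_MW_suboptimal_le) auto
    also have "\<dots> \<le> exp (- L)" using mL by simp
    also have "\<dots> = \<delta> / (2 * real n)"
      unfolding L_def using assms(1,4) by (simp add: exp_minus exp_ln)
    finally show ?thesis .
  qed
  have "(\<Sum>j\<in>{..<n}-Opt. \<Sum>y\<in>outcomes m. bprob m \<theta> y * MW \<eta> n m R y j)
      \<le> real (card ({..<n}-Opt)) * (\<delta> / (2 * real n))"
    using bad by (rule sum_bounded_above)
  also have "\<dots> \<le> real n * (\<delta> / (2 * real n))"
    using assms(4) by (intro mult_right_mono) (auto simp: card_Diff_subset_Int)
  also have "\<dots> = \<delta> / 2" using assms(1) by simp
  finally have "(\<Sum>j\<in>{..<n}-Opt. \<Sum>y\<in>outcomes m. bprob m \<theta> y * MW \<eta> n m R y j) \<le> \<delta> / 2" .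
  moreover have "Opt \<subseteq> {..<n}" unfolding Opt_def by auto
  ultimately have "1 - \<delta> \<le> (\<Sum>y\<in>outcomes m. bprob m \<theta> y * (\<Sum>i\<in>Opt. MW \<eta> n m R y i))"
    using expected_MW_sum_eq[of n Opt m \<theta> \<eta> R] assms(1,4) by simp
  then show "1 - \<delta> \<le> (\<Sum>y\<in>outcomes m. bprob m \<theta> y *
      (\<Sum>i\<in>{i. i < n \<and> eps_optimal n m P \<theta> \<epsilon> i}. MW \<eta> n m R y i))"
    unfolding Opt_def .
qed

lemma event_complexity_le_ceiling:
  assumes "0 \<le> B"
    and "\<And>m P \<theta>. B \<le> real m \<Longrightarrow> \<forall>i<n. valid_vec m (P i) \<Longrightarrow> valid_vec m \<theta> \<Longrightarrow>
      mw_accurate \<eta> n m P \<theta> \<epsilon> \<delta>"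
  shows "real (event_complexity \<eta> n \<epsilon> \<delta>) \<le> real_of_int \<lceil>B\<rceil>"
proof -
  have "B \<le> real (nat \<lceil>B\<rceil>)" by linarith
  then have "event_complexity \<eta> n \<epsilon> \<delta> \<le> nat \<lceil>B\<rceil>"
    unfolding event_complexity_def using assms(2) by (intro Least_le) blast
  then show ?thesis using assms(1) by linarith
qed

theorem mainTheorem10:
  fixes n :: nat and \<epsilon> \<delta> \<eta> :: real
  assumes "n \<ge> 2"
    and "0 < \<epsilon>" and "\<epsilon> \<le> 1"
    and "0 < \<delta>" and "\<delta> < 1"
    and "0 < \<eta>" and "\<eta> \<le> \<epsilon> / 40"
  shows "(\<forall>m. approx_truthful \<eta> n m (4 * \<eta>))
    \<and> (\<forall>m P \<theta>. real m \<ge> 5 * ln (2 * real n / \<delta>) / (\<eta> * \<epsilon>) \<longrightarrow>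
          (\<forall>i<n. valid_vec m (P i)) \<longrightarrow> valid_vec m \<theta> \<longrightarrow>
          mw_accurate \<eta> n m P \<theta> \<epsilon> \<delta>)
    \<and> real (event_complexity (\<epsilon> / 40) n \<epsilon> \<delta>)
        \<le> real_of_int \<lceil>200 * ln (2 * real n / \<delta>) / \<epsilon>^2\<rceil>"
proof (intro conjI allI impI)
  show "approx_truthful \<eta> n m (4 * \<eta>)" for m
    by (rule approx_truthful_MW[OF assms(1,6)])
  show "mw_accurate \<eta> n m P \<theta> \<epsilon> \<delta>"
    if "5 * ln (2 * real n / \<delta>) / (\<eta> * \<epsilon>) \<le> real m" "\<forall>i<n. valid_vec m (P i)" "valid_vec m \<theta>"
    for m P \<theta>
    by (rule mw_accurate_MW[OF assms that])
  have "1 \<le> 2 * real n / \<delta>" using assms(1,4,5) by (simp add: field_simps)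
  then have "0 \<le> 200 * ln (2 * real n / \<delta>) / \<epsilon>^2" by simp
  moreover have "5 * ln (2 * real n / \<delta>) / (\<epsilon> / 40 * \<epsilon>) = 200 * ln (2 * real n / \<delta>) / \<epsilon>^2"
    by (simp add: field_simps power2_eq_square)
  ultimately show "real (event_complexity (\<epsilon> / 40) n \<epsilon> \<delta>)
      \<le> real_of_int \<lceil>200 * ln (2 * real n / \<delta>) / \<epsilon>^2\<rceil>"
    using mw_accurate_MW[OF assms(1-5), of "\<epsilon> / 40"] assms(2)
    by (intro event_complexity_le_ceiling) auto
qed

end
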